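(* Let $\mathscr X\in\mathbb R^{I_1\times\cdots\times I_N}$ be a nonzero tensor, fix $n$ with $1\leq n\leq N$, and set $R=\operatorname{rank}(\mathbf X_{(n)})$. Let $j_1<\cdots<j_R$ be the indices of $R$ linearly independent rows of $\mathbf X_{(n)}$, and define $\mathbf A\in\mathbb R^{R\times I_n}$ by $a_{st}=1$ if $t=j_s$ and $a_{st}=0$ otherwise. Set $\mathscr Y=\mathscr X\times_n\mathbf A$. Then $\mathscr Y$ is a subtensor of $\mathscr X$, and $\operatorname{rank}(\mathbf Y_{(m)})=\operatorname{rank}(\mathbf X_{(m)})$ for every $m$ with $1\leq m\leq N$.
   Context: All tensors are real. For $\mathscr X\in\mathbb R^{I_1\times\cdots\times I_N}$, the mode-$n$ unfolding $\mathbf X_{(n)}\in\mathbb R^{I_n\times (\prod_{k\neq n}I_k)}$ is the matrix whose rows are indexed by $i_n$ and whose columns are exactly the vectors $(x_{i_1\cdots i_N})_{i_n=1}^{I_n}$ obtained by fixing all indices other than $i_n$ (in a fixed standard order of the remaining indices). The mode-$n$ product of $\mathscr X$ with $\mathbf A\in\mathbb R^{J\times I_n}$ is the tensor $\mathscr X\times_n\mathbf A\in\mathbb R^{I_1\times\cdots\times I_{n-1}\times J\times I_{n+1}\times\cdots\times I_N}$ with entries $(\mathscr X\times_n\mathbf A)_{i_1\cdots i_{n-1}j i_{n+1}\cdots i_N}=\sum_{i_n=1}^{I_n}x_{i_1\cdots i_N}a_{j i_n}$. A subtensor of $\mathscr X$ is a tensor $\mathscr Y\in\mathbb R^{J_1\times\cdots\times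 J_N}$ with $1\le J_n\le I_n$ of the form $y_{j_1\cdots j_N}=x_{i_{1j_1}\cdots i_{Nj_N}}$ for some indices $1\leq i_{n1}<\cdots<i_{nJ_n}\leq I_n$, $1\le n\le N$. *)

theory Defs
  imports "Jordan_Normal_Form.DL_Rank"
begin

text \<open>A tensor in R^(I_1 x ... x I_N) is represented by its dimension list
  I :: nat list (N = length I) and an entry function X :: nat list => real, of which only
  the values at valid multi-indices matter. Indices and modes are 0-based:
  a valid multi-index is a list i with length i = N and i!k < I!k.\<close>

definition tensor_indices :: "nat list \<Rightarrow> nat list set" where
  "tensor_indices I = {i. length i = length I \<and> (\<forall>k<length I. i ! k < I ! k)}"

definition mat_rank :: "real mat \<Rightarrow> nat" where
  "mat_rank M = vec_space.rank (dim_row M) M"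

text \<open>Standard (Kolda-Bader) column ordering of the mode-n unfolding:
  the other indices i_k (k \<noteq> n) are combined in little-endian mixed radix.\<close>
definition col_stride :: "nat list \<Rightarrow> nat \<Rightarrow> nat \<Rightarrow> nat" where
  "col_stride I n k = (\<Prod>m\<in>{m. m < k \<and> m \<noteq> n}. I ! m)"

definition unfold_index :: "nat list \<Rightarrow> nat \<Rightarrow> nat \<Rightarrow> nat \<Rightarrow> nat list" where
  "unfold_index I n r c =
     map (\<lambda>k. if k = n then r else (c div col_stride I n k) mod (I ! k)) [0..<length I]"

definition mode_unfolding :: "nat list \<Rightarrow> nat \<Rightarrow> (nat list \<Rightarrow> real) \<Rightarrow> real mat" where
  "mode_unfolding I n X =
     mat (I ! n) (\<Prod>k\<in>{k. k < length I \<and> k \<noteq> n}. I ! k) (\<lambda>(r, c). X (unfold_index I n r c))"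

text \<open>Mode-n product X \<times>_n A for A of size J x I_n; result has dimensions I[n := J].\<close>
definition mode_product :: "nat list \<Rightarrow> nat \<Rightarrow> (nat list \<Rightarrow> real) \<Rightarrow> real mat \<Rightarrow> (nat list \<Rightarrow> real)" where
  "mode_product I n X A = (\<lambda>i. \<Sum>t<I ! n. X (i[n := t]) * A $$ (i ! n, t))"

definition is_subtensor :: "nat list \<Rightarrow> (nat list \<Rightarrow> real) \<Rightarrow> nat list \<Rightarrow> (nat list \<Rightarrow> real) \<Rightarrow> bool" where
  "is_subtensor I X J Y \<longleftrightarrow>
     length J = length I \<and> (\<forall>k<length I. 1 \<le> J ! k \<and> J ! k \<le> I ! k) \<and>
     (\<exists>idx :: nat \<Rightarrow> nat \<Rightarrow> nat.
        (\<forall>k<length I. (\<forall>a b. a < b \<and> b < J ! k \<longrightarrow> idx k a < idx k b) \<and>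
                      (\<forall>a<J ! k. idx k a < I ! k)) \<and>
        (\<forall>j\<in>tensor_indices J. Y j = X (map (\<lambda>k. idx k (j ! k)) [0..<length I])))"

end

theory Submission
  imports Defs
begin

text \<open>The selected rows are \<open>R\<close> independent rows of the rank-\<open>R\<close> matrix \<open>X\<^sub>(\<^sub>n\<^sub>)\<close>, so they
  span its row space: every mode-\<open>n\<close> slice of \<open>X\<close> is a linear combination of the selected slices,
  which are the slices of \<open>Y\<close>. Hence for \<open>m \<noteq> n\<close> every mode-\<open>m\<close> fiber of \<open>X\<close> is a combination
  of fibers of \<open>Y\<close>, while the fibers of \<open>Y\<close> are fibers of \<open>X\<close>: the unfoldings \<open>X\<^sub>(\<^sub>m\<^sub>)\<close> and
  \<open>Y\<^sub>(\<^sub>m\<^sub>)\<close> have the same column space. For \<open>m = n\<close> the rows of \<open>Y\<^sub>(\<^sub>n\<^sub>)\<close> are the \<open>R\<close>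
  independent rows, and row rank equals column rank.\<close>

section \<open>Rank of matrices\<close>

lemma index_mat_of_cols_mult_vec:
  fixes v :: "'a :: comm_semiring_0 vec"
  assumes "r < n" and "v \<in> carrier_vec (length ws)"
  shows "(mat_of_cols n ws *\<^sub>v v) $ r = (\<Sum>s<length ws. v $ s * ws ! s $ r)"
  using assms by (auto simp: scalar_prod_def mat_of_cols_index lessThan_atLeast0 mult.commute intro!: sum.cong)

context vec_space
begin

lemma span_cols_eq_image_mult_mat_vec:
  assumes A: "A \<in> carrier_mat n k"
  shows "span (set (cols A)) = (\<lambda>x. A *\<^sub>v x) ` carrier_vec k"
proof -
  have colsA: "set (cols A) \<subseteq> carrier_vec n" using A cols_dim by blast
  have "mat_of_cols n (cols A) = A" using mat_of_cols_cols[of A] A by simp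
  moreover have "\<forall>w\<in>set (cols A). dim_vec w = n" using colsA by auto
  ultimately have lincomb: "lincomb_list c (cols A) = A *\<^sub>v vec k c" for c
    using lincomb_list_as_mat_mult[of "cols A" c] A by simp
  have "span (set (cols A)) = range (\<lambda>c. A *\<^sub>v vec k c)"
    by (auto simp: span_list_as_span[OF colsA, symmetric] span_list_def lincomb)
  also have "\<dots> = (\<lambda>x. A *\<^sub>v x) ` carrier_vec k"
  proof (rule subset_antisym)
    show "(\<lambda>x. A *\<^sub>v x) ` carrier_vec k \<subseteq> range (\<lambda>c. A *\<^sub>v vec k c)"
    proof
      fix v assume "v \<in> (\<lambda>x. A *\<^sub>v x) ` carrier_vec k"
      then obtain x where "x \<in> carrier_vec k" "v = A *\<^sub>v x" by blast
      then have "v = A *\<^sub>v vec k (\<lambda>i. x $ i)" by (metis carrier_vecD eq_vecI dim_vec index_vec)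
      then show "v \<in> range (\<lambda>c. A *\<^sub>v vec k c)" by blast
    qed
  qed auto
  finally show ?thesis .
qed

lemma rank_le_of_cols_in_span:
  assumes A: "A \<in> carrier_mat n nc" and B: "B \<in> carrier_mat n nc'"
    and sub: "set (cols A) \<subseteq> span (set (cols B))"
  shows "rank A \<le> rank B"
proof -
  have cB: "set (cols B) \<subseteq> carrier_vec n" using B cols_dim by blast
  have vs: "vectorspace class_ring (vs (span (set (cols B))))"
    using span_is_subspace[THEN subspace_is_vs, OF cB] by auto
  have sm: "submodule class_ring (span (set (cols B))) V" using cB by (simp add: span_is_submodule)
  have sub2: "subspace class_ring (span (set (cols A))) (vs (span (set (cols B))))"
    using vectorspace.span_is_subspace[OF vs, of "set (cols A)", unfolded
    span_li_not_depend(1)[OF sub sm]] sub by auto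
  have fin_dim: "vectorspace.fin_dim class_ring (vs (span (set (cols B))))"
       "vectorspace.fin_dim class_ring (vs (span (set (cols B)))\<lparr>carrier := span (set (cols A))\<rparr>)"
    using fin_dim_span_cols A B by auto
  show ?thesis unfolding rank_def using vectorspace.subspace_dim[OF vs sub2 fin_dim] by simp
qed

lemma rank_eq_of_cols_subset_span:
  assumes A: "A \<in> carrier_mat n nc" and B: "B \<in> carrier_mat n nc'"
    and "set (cols A) \<subseteq> set (cols B)" and "set (cols B) \<subseteq> span (set (cols A))"
  shows "rank A = rank B"
proof -
  have "set (cols B) \<subseteq> carrier_vec n" using B cols_dim by blast
  then have "set (cols A) \<subseteq> span (set (cols B))" using assms(3) in_own_span by blast
  then show ?thesis using rank_le_of_cols_in_span[OF A B] rank_le_of_cols_in_span[OF B A] assms(4)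
    by (simp add: le_antisym)
qed

lemma rank_mult_le_left:
  assumes A: "A \<in> carrier_mat n k" and B: "B \<in> carrier_mat k nc"
  shows "rank (A * B) \<le> rank A"
proof (rule rank_le_of_cols_in_span[OF _ A])
  show "A * B \<in> carrier_mat n nc" using A B by simp
  show "set (cols (A * B)) \<subseteq> span (set (cols A))"
  proof
    fix v assume "v \<in> set (cols (A * B))"
    then obtain j where j: "j < nc" and v: "v = col (A * B) j" using A B by (auto simp: cols_def)
    have "v = A *\<^sub>v col B j" unfolding v using A B j by (rule col_mult2)
    moreover have "col B j \<in> carrier_vec k" using B j by simp
    ultimately show "v \<in> span (set (cols A))" unfolding span_cols_eq_image_mult_mat_vec[OF A] by blast
  qed
qed

lemma factor_of_cols_in_span:
  assumes C: "C \<in> carrier_mat n k" and A: "A \<in> carrier_mat n nc"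
    and sub: "set (cols A) \<subseteq> span (set (cols C))"
  obtains F where "F \<in> carrier_mat k nc" and "A = C * F"
proof -
  have "\<exists>x \<in> carrier_vec k. col A j = C *\<^sub>v x" if "j < nc" for j
  proof -
    have "col A j \<in> set (cols A)" using that A by (simp add: cols_def)
    then show ?thesis using sub unfolding span_cols_eq_image_mult_mat_vec[OF C] by blast
  qed
  then obtain x where x: "\<And>j. j < nc \<Longrightarrow> x j \<in> carrier_vec k \<and> col A j = C *\<^sub>v x j" by metis
  define F where "F = mat_of_cols k (map x [0..<nc])"
  have "A = C * F"
    by (rule mat_col_eqI) (use A C x in \<open>auto simp: F_def col_mult2\<close>)
  moreover have "F \<in> carrier_mat k nc" using mat_of_cols_carrier(1)[of k "map x [0..<nc]"] by (simp add: F_def)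
  ultimately show thesis using that by blast
qed

lemma spanning_list_of_rank:
  assumes A: "A \<in> carrier_mat n nc"
  obtains bs where "set bs \<subseteq> carrier_vec n" and "length bs = rank A"
    and "set (cols A) \<subseteq> span (set bs)"
proof -
  let ?indpt = "\<lambda>T. T \<subseteq> set (cols A) \<and> lin_indpt T"
  have colsA: "set (cols A) \<subseteq> carrier_vec n" using A cols_dim by blast
  obtain S where max: "maximal S ?indpt"
    using maximal_exists[of ?indpt "card (set (cols A))" "{}"]
    by (meson List.finite_set card_mono empty_iff empty_subsetI finite_lin_indpt2 rev_finite_subset)
  then have S: "S \<subseteq> set (cols A)" "lin_indpt S" unfolding maximal_def by auto
  have "col \<in> span S" if "col \<in> set (cols A)" for col
  proof (rule ccontr)
    assume col: "col \<notin> span S"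
    then have "col \<notin> S" using in_own_span[of S] S colsA by auto
    then have "?indpt (insert col S)"
      using lin_dep_iff_in_span[of S col] S colsA that col by auto
    then have "insert col S = S" using max unfolding maximal_def by blast
    then show False using \<open>col \<notin> S\<close> by blast
  qed
  then have span: "set (cols A) \<subseteq> span S" by blast
  obtain bs where bs: "set bs = S" "distinct bs"
    using finite_distinct_list[OF finite_subset[OF S(1)]] by blast
  show thesis
  proof (rule that[of bs])
    show "set bs \<subseteq> carrier_vec n" using bs S colsA by blast
    show "length bs = rank A" using rank_card_indpt[OF A max] bs distinct_card by metis
    show "set (cols A) \<subseteq> span (set bs)" using span bs by simp
  qed
qed

end

text \<open>Factor \<open>A = B * F\<close> through a list \<open>B\<close> of \<open>rank A\<close> vectors spanning its columns; then the
  columns of \<open>A\<^sup>T = F\<^sup>T * B\<^sup>T\<close> lie in the span of the \<open>rank A\<close> columns of \<open>F\<^sup>T\<close>.\<close>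

lemma rank_transpose_le:
  fixes A :: "'a::field mat"
  assumes A: "A \<in> carrier_mat n nc"
  shows "vec_space.rank nc A\<^sup>T \<le> vec_space.rank n A"
proof -
  interpret N: vec_space "TYPE('a)" n .
  interpret C: vec_space "TYPE('a)" nc .
  obtain bs where bs: "set bs \<subseteq> carrier_vec n" "length bs = N.rank A"
    and span: "set (cols A) \<subseteq> N.span (set bs)"
    using N.spanning_list_of_rank[OF A] .
  define B where "B = mat_of_cols n bs"
  have B: "B \<in> carrier_mat n (N.rank A)" and "cols B = bs"
    using bs unfolding B_def by auto
  then obtain F where F: "F \<in> carrier_mat (N.rank A) nc" and AF: "A = B * F"
    using N.factor_of_cols_in_span[OF B A] span by metis
  have "C.rank A\<^sup>T = C.rank (F\<^sup>T * B\<^sup>T)" using AF transpose_mult[OF B F] by simp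
  also have "\<dots> \<le> C.rank F\<^sup>T" using C.rank_mult_le_left[of "F\<^sup>T" "N.rank A" "B\<^sup>T" n] B F by simp
  also have "\<dots> \<le> N.rank A" using C.rank_le_nc[of "F\<^sup>T"] F by simp
  finally show ?thesis .
qed

lemma rank_transpose:
  fixes A :: "'a::field mat"
  assumes A: "A \<in> carrier_mat n nc"
  shows "vec_space.rank nc A\<^sup>T = vec_space.rank n A"
  using rank_transpose_le[OF A] rank_transpose_le[of "A\<^sup>T" nc n] A by simp

context vec_space
begin

lemma rows_in_span_of_indpt_rows:
  assumes A: "A \<in> carrier_mat nr n" and ws: "set ws \<subseteq> set (rows A)"
    and indpt: "distinct ws" "lin_indpt (set ws)" and len: "length ws = vec_space.rank nr A"
  shows "set (rows A) \<subseteq> span (set ws)"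
proof
  fix v assume v: "v \<in> set (rows A)"
  have rowsA: "set (rows A) \<subseteq> carrier_vec n" using A by (auto simp: rows_def)
  show "v \<in> span (set ws)"
  proof (rule ccontr)
    assume nin: "v \<notin> span (set ws)"
    then have "v \<notin> set ws" using in_own_span[of "set ws"] ws rowsA by blast
    have "lin_indpt (insert v (set ws))"
      using lin_dep_iff_in_span[of "set ws" v] nin \<open>v \<notin> set ws\<close> ws rowsA v indpt(2) by auto
    moreover have "insert v (set ws) \<subseteq> set (cols A\<^sup>T)" using v ws by simp
    ultimately have "card (insert v (set ws)) \<le> rank A\<^sup>T"
      using rank_ge_card_indpt[of "A\<^sup>T" nr] A by simp
    also have "\<dots> = length ws" using rank_transpose[OF A] len by simp
    finally show False using \<open>v \<notin> set ws\<close> indpt(1) by (simp add: distinct_card)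
  qed
qed

lemma entries_lincomb_of_indpt_rows:
  assumes A: "A \<in> carrier_mat nr n" and js: "\<forall>s<length js. js ! s < nr"
    and indpt: "distinct (map (row A) js)" "lin_indpt (set (map (row A) js))"
    and len: "length js = vec_space.rank nr A"
  obtains B where "\<And>t c. t < nr \<Longrightarrow> c < n \<Longrightarrow> A $$ (t, c) = (\<Sum>s<length js. B t s * A $$ (js ! s, c))"
proof -
  define W where "W = mat_of_cols n (map (row A) js)"
  have W: "W \<in> carrier_mat n (length js)"
    using mat_of_cols_carrier(1)[of n "map (row A) js"] by (simp add: W_def)
  have colsW: "cols W = map (row A) js" unfolding W_def using A by (intro cols_mat_of_cols) auto
  have "set (map (row A) js) \<subseteq> set (rows A)"
  proof
    fix v assume "v \<in> set (map (row A) js)"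
    then obtain s where "s < length js" "v = row A (js ! s)" by (auto simp: in_set_conv_nth)
    then show "v \<in> set (rows A)" using js A by (force simp: rows_def)
  qed
  then have "set (rows A) \<subseteq> span (set (cols W))"
    using rows_in_span_of_indpt_rows[OF A _ indpt] len colsW by simp
  then have "\<exists>x\<in>carrier_vec (length js). row A t = W *\<^sub>v x" if "t < nr" for t
  proof -
    have "row A t \<in> set (rows A)" using that A by (force simp: rows_def)
    then show ?thesis
      using \<open>set (rows A) \<subseteq> span (set (cols W))\<close> unfolding span_cols_eq_image_mult_mat_vec[OF W] by blast
  qed
  then obtain x where x: "\<And>t. t < nr \<Longrightarrow> x t \<in> carrier_vec (length js) \<and> row A t = W *\<^sub>v x t"
    by metis
  have "A $$ (t, c) = (\<Sum>s<length js. x t $ s * A $$ (js ! s, c))" if "t < nr" "c < n" for t c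
  proof -
    have "A $$ (t, c) = (W *\<^sub>v x t) $ c" using x[of t] that A by (metis index_row carrier_matD)
    also have "\<dots> = (\<Sum>s<length js. x t $ s * A $$ (js ! s, c))"
      using that x[of t] js A by (simp add: W_def index_mat_of_cols_mult_vec del: index_mult_mat_vec)
    finally show ?thesis .
  qed
  then show thesis by (rule that)
qed

end

lemma rank_eq_dim_row_of_indpt_rows:
  fixes A :: "'a::field mat"
  assumes A: "A \<in> carrier_mat nr nc" and "distinct (rows A)"
    and "module.lin_indpt class_ring (module_vec TYPE('a) nc) (set (rows A))"
  shows "vec_space.rank nr A = nr"
  using vec_space.lin_indpt_full_rank[of "A\<^sup>T" nc nr] rank_transpose[OF A] assms by simp

section \<open>Mode unfoldings\<close>

lemma mixed_radix_digits_surj: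
  fixes K :: "nat set" and D d :: "nat \<Rightarrow> nat"
  assumes "finite K" and "\<forall>k\<in>K. d k < D k"
  shows "\<exists>c < (\<Prod>k\<in>K. D k). \<forall>k\<in>K. c div (\<Prod>l\<in>{l\<in>K. l < k}. D l) mod D k = d k"
  using assms
proof (induction K rule: finite_linorder_max_induct)
  case empty
  then show ?case by simp
next
  case (insert b K)
  define P where "P = (\<Prod>k\<in>K. D k)"
  obtain c where c: "c < P" and digits: "\<forall>k\<in>K. c div (\<Prod>l\<in>{l\<in>K. l < k}. D l) mod D k = d k"
    using insert by (auto simp: P_def)
  have b: "b \<notin> K" "\<forall>k\<in>K. k < b" using insert.hyps by auto
  define c' where "c' = c + P * d b"
    \<comment> \<open>sets the top digit; lower digits survive because their place values times \<open>D k\<close> divide \<open>P\<close>\<close>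
  have "c' < P * (d b + 1)" using c by (simp add: c'_def)
  also have "\<dots> \<le> P * D b" using insert.prems by (intro mult_le_mono2) auto
  finally have "c' < (\<Prod>k\<in>insert b K. D k)"
    using b insert.hyps(1) by (simp add: P_def mult.commute)
  moreover have "c' div (\<Prod>l\<in>{l\<in>insert b K. l < k}. D l) mod D k = d k" if k: "k \<in> insert b K" for k
  proof (cases "k = b")
    case True
    then have "{l\<in>insert b K. l < k} = K" using b by auto
    moreover have "c' div P = d b" using c by (simp add: c'_def)
    ultimately show ?thesis using True insert.prems by (simp add: P_def)
  next
    case False
    then have "k \<in> K" using k by simp
    define s where "s = (\<Prod>l\<in>{l\<in>K. l < k}. D l)"
    have "0 < D l" if "l \<in> K" for l using insert.prems that by (metis insertCI gr_zeroI less_zeroE)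
    then have "0 < s" unfolding s_def by (simp add: prod_pos)
    have "{l\<in>K. l \<le> k} = insert k {l\<in>K. l < k}" using \<open>k \<in> K\<close> by auto
    then have "(\<Prod>l\<in>{l\<in>K. l \<le> k}. D l) = D k * s"
      unfolding s_def using insert.hyps(1) by simp
    moreover have "(\<Prod>l\<in>{l\<in>K. l \<le> k}. D l) dvd P"
      unfolding P_def by (rule prod_dvd_prod_subset) (use insert.hyps(1) in auto)
    ultimately have "s * D k dvd P" by (simp add: mult.commute)
    then obtain q where "P = s * (D k * q)" by (metis dvd_def mult.assoc)
    then have "c' div s = D k * (q * d b) + c div s"
      using \<open>0 < s\<close> by (simp add: c'_def mult.assoc)
    moreover have "{l\<in>insert b K. l < k} = {l\<in>K. l < k}" using b \<open>k \<in> K\<close> by auto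
    ultimately show ?thesis using digits \<open>k \<in> K\<close> by (simp add: s_def)
  qed
  ultimately show ?case by blast
qed

lemma dim_row_mode_unfolding [simp]: "dim_row (mode_unfolding I m Z) = I ! m"
  and dim_col_mode_unfolding [simp]:
    "dim_col (mode_unfolding I m Z) = (\<Prod>k\<in>{k. k < length I \<and> k \<noteq> m}. I ! k)"
  by (simp_all add: mode_unfolding_def)

lemma mode_unfolding_carrier:
  "mode_unfolding I m Z \<in> carrier_mat (I ! m) (dim_col (mode_unfolding I m Z))"
  by (simp add: carrier_matI)

lemma index_mode_unfolding [simp]:
  "r < I ! m \<Longrightarrow> c < dim_col (mode_unfolding I m Z) \<Longrightarrow>
    mode_unfolding I m Z $$ (r, c) = Z (unfold_index I m r c)"
  by (simp add: mode_unfolding_def)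

lemma length_unfold_index [simp]: "length (unfold_index I m r c) = length I"
  by (simp add: unfold_index_def)

lemma nth_unfold_index_mode [simp]: "m < length I \<Longrightarrow> unfold_index I m r c ! m = r"
  by (simp add: unfold_index_def)

lemma unfold_index_update [simp]:
  "m < length I \<Longrightarrow> (unfold_index I m r c)[m := r'] = unfold_index I m r' c"
  by (rule nth_equalityI) (auto simp: unfold_index_def)

lemma unfold_index_update_dim [simp]: "unfold_index (I[m := J]) m = unfold_index I m"
proof -
  have "col_stride (I[m := J]) m = col_stride I m"
    unfolding col_stride_def by (intro ext prod.cong) auto
  then show ?thesis by (intro ext nth_equalityI) (auto simp: unfold_index_def)
qed

lemma unfold_index_in_tensor_indices:
  assumes r: "r < I ! m" and c: "c < dim_col (mode_unfolding I m Z)"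
  shows "unfold_index I m r c \<in> tensor_indices I"
proof -
  have "0 < dim_col (mode_unfolding I m Z)" using c by linarith
  then have "0 < I ! k" if "k < length I" "k \<noteq> m" for k using that by simp
  then show ?thesis using r by (auto simp: tensor_indices_def unfold_index_def)
qed

lemma unfold_index_surj:
  assumes m: "m < length I" and i: "i \<in> tensor_indices I"
  obtains c where "c < dim_col (mode_unfolding I m Z)" and "\<And>r. unfold_index I m r c = i[m := r]"
proof -
  define K where "K = {k. k < length I \<and> k \<noteq> m}"
  have i: "length i = length I" "\<forall>k<length I. i ! k < I ! k"
    using i by (auto simp: tensor_indices_def)
  then obtain c where c: "c < (\<Prod>k\<in>K. I ! k)"
    and digits: "\<forall>k\<in>K. c div (\<Prod>l\<in>{l\<in>K. l < k}. I ! l) mod I ! k = i ! k"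
    using mixed_radix_digits_surj[of K "(!) i" "(!) I"] by (auto simp: K_def)
  have stride: "col_stride I m k = (\<Prod>l\<in>{l\<in>K. l < k}. I ! l)" if "k < length I" for k
  proof -
    have "{l. l < k \<and> l \<noteq> m} = {l\<in>K. l < k}" using that by (auto simp: K_def)
    then show ?thesis by (simp add: col_stride_def)
  qed
  have unfold: "unfold_index I m r c = i[m := r]" for r
  proof (rule nth_equalityI)
    show "length (unfold_index I m r c) = length (i[m := r])" using i by simp
    fix k assume "k < length (unfold_index I m r c)"
    then have k: "k < length I" by simp
    show "unfold_index I m r c ! k = i[m := r] ! k"
    proof (cases "k = m")
      case True
      then show ?thesis using k i by (simp add: unfold_index_def)
    next
      case False
      then have "k \<in> K" using k by (simp add: K_def)
      then show ?thesis using False k i digits stride[OF k] by (simp add: unfold_index_def)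
    qed
  qed
  have "c < dim_col (mode_unfolding I m Z)" using c by (simp add: K_def)
  then show thesis using unfold by (rule that)
qed

lemma mode_unfolding_cong:
  assumes "\<forall>i\<in>tensor_indices I. Z i = Z' i"
  shows "mode_unfolding I m Z = mode_unfolding I m Z'"
proof (rule eq_matI)
  fix r c assume "r < dim_row (mode_unfolding I m Z')" "c < dim_col (mode_unfolding I m Z')"
  then show "mode_unfolding I m Z $$ (r, c) = mode_unfolding I m Z' $$ (r, c)"
    using assms unfold_index_in_tensor_indices[of r I m c Z] by simp
qed simp_all

definition mode_fiber :: "nat list \<Rightarrow> nat \<Rightarrow> (nat list \<Rightarrow> 'a) \<Rightarrow> nat list \<Rightarrow> 'a vec" where
  "mode_fiber I m Z i = vec (I ! m) (\<lambda>r. Z (i[m := r]))"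

lemma set_cols_mode_unfolding:
  assumes m: "m < length I" and pos: "0 < I ! m"
  shows "set (cols (mode_unfolding I m Z)) = mode_fiber I m Z ` tensor_indices I"
proof (intro subset_antisym subsetI)
  fix v assume "v \<in> set (cols (mode_unfolding I m Z))"
  then obtain c where c: "c < dim_col (mode_unfolding I m Z)" and v: "v = col (mode_unfolding I m Z) c"
    by (auto simp: cols_def)
  have "v = mode_fiber I m Z (unfold_index I m 0 c)"
    unfolding v mode_fiber_def
  proof (rule eq_vecI)
    fix r assume "r < dim_vec (vec (I ! m) (\<lambda>r. Z ((unfold_index I m 0 c)[m := r])))"
    then show "col (mode_unfolding I m Z) c $ r = vec (I ! m) (\<lambda>r. Z ((unfold_index I m 0 c)[m := r])) $ r"
      using c m by simp
  qed simp
  moreover have "unfold_index I m 0 c \<in> tensor_indices I"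
    using unfold_index_in_tensor_indices[OF pos c] .
  ultimately show "v \<in> mode_fiber I m Z ` tensor_indices I" by blast
next
  fix v assume "v \<in> mode_fiber I m Z ` tensor_indices I"
  then obtain i where i: "i \<in> tensor_indices I" and v: "v = mode_fiber I m Z i" by blast
  obtain c where c: "c < dim_col (mode_unfolding I m Z)" and ci: "\<And>r. unfold_index I m r c = i[m := r]"
    using unfold_index_surj[OF m i] by blast
  have "v = col (mode_unfolding I m Z) c"
    unfolding v mode_fiber_def
  proof (rule eq_vecI)
    fix r assume "r < dim_vec (col (mode_unfolding I m Z) c)"
    then show "vec (I ! m) (\<lambda>r. Z (i[m := r])) $ r = col (mode_unfolding I m Z) c $ r"
      using c ci by simp
  qed simp
  then show "v \<in> set (cols (mode_unfolding I m Z))" using c by (simp add: cols_def)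
qed

section \<open>Selecting mode-\<open>n\<close> slices\<close>

definition select_slices :: "nat \<Rightarrow> nat list \<Rightarrow> (nat list \<Rightarrow> 'a) \<Rightarrow> nat list \<Rightarrow> 'a" where
  "select_slices n js X j = X (j[n := js ! (j ! n)])"

lemma mode_product_selection_matrix:
  assumes "j ! n < length js" and "\<forall>s<length js. js ! s < I ! n"
  shows "mode_product I n X (mat (length js) (I ! n) (\<lambda>(s, t). if t = js ! s then 1 else 0)) j
    = select_slices n js X j"
proof -
  have "mode_product I n X (mat (length js) (I ! n) (\<lambda>(s, t). if t = js ! s then 1 else 0)) j
      = (\<Sum>t<I ! n. if t = js ! (j ! n) then X (j[n := t]) else 0)"
    unfolding mode_product_def
  proof (rule sum.cong)
    fix t assume "t \<in> {..<I ! n}"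
    then show "X (j[n := t]) * mat (length js) (I ! n) (\<lambda>(s, t). if t = js ! s then 1 else 0) $$ (j ! n, t)
      = (if t = js ! (j ! n) then X (j[n := t]) else 0)"
      using assms(1) by simp
  qed simp
  also have "\<dots> = select_slices n js X j" using assms by (simp add: select_slices_def)
  finally show ?thesis .
qed

lemma length_le_of_sorted_bounded:
  assumes "sorted_wrt (<) js" and "\<forall>s<length js. js ! s < N"
  shows "length js \<le> N"
proof -
  have "set js \<subseteq> {..<N}" using assms(2) by (auto simp: in_set_conv_nth)
  then have "card (set js) \<le> N" using card_mono[of "{..<N}"] by simp
  then show ?thesis using assms(1) by (simp add: distinct_card strict_sorted_iff)
qed

lemma is_subtensor_select_slices:
  assumes n: "n < length I" and pos: "\<forall>k<length I. 0 < I ! k" and "js \<noteq> []"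
    and sorted: "sorted_wrt (<) js" and js: "\<forall>s<length js. js ! s < I ! n"
  shows "is_subtensor I X (I[n := length js]) (select_slices n js X)"
  unfolding is_subtensor_def
proof (intro conjI exI[of _ "\<lambda>k a. if k = n then js ! a else a"])
  show "length (I[n := length js]) = length I" by simp
  show "\<forall>k<length I. 1 \<le> I[n := length js] ! k \<and> I[n := length js] ! k \<le> I ! k"
    using n pos \<open>js \<noteq> []\<close> length_le_of_sorted_bounded[OF sorted js]
    by (auto simp: nth_list_update Suc_le_eq)
  show "\<forall>k<length I. (\<forall>a b. a < b \<and> b < I[n := length js] ! k \<longrightarrow>
      (if k = n then js ! a else a) < (if k = n then js ! b else b)) \<and>
      (\<forall>a<I[n := length js] ! k. (if k = n then js ! a else a) < I ! k)"
    using n sorted js by (auto simp: nth_list_update sorted_wrt_iff_nth_less)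
  show "\<forall>j\<in>tensor_indices (I[n := length js]). select_slices n js X j
      = X (map (\<lambda>k. if k = n then js ! (j ! k) else j ! k) [0..<length I])"
  proof
    fix j assume "j \<in> tensor_indices (I[n := length js])"
    then have "length j = length I" by (simp add: tensor_indices_def)
    then have "map (\<lambda>k. if k = n then js ! (j ! k) else j ! k) [0..<length I] = j[n := js ! (j ! n)]"
      by (intro nth_equalityI) auto
    then show "select_slices n js X j = X (map (\<lambda>k. if k = n then js ! (j ! k) else j ! k) [0..<length I])"
      by (simp add: select_slices_def)
  qed
qed

lemma is_subtensor_cong:
  assumes "is_subtensor I X J Y" and "\<forall>j\<in>tensor_indices J. Y' j = Y j"
  shows "is_subtensor I X J Y'"
  using assms unfolding is_subtensor_def by simp

lemma rows_mode_unfolding_select_slices: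
  assumes n: "n < length I" and js: "\<forall>s<length js. js ! s < I ! n"
  shows "rows (mode_unfolding (I[n := length js]) n (select_slices n js X))
    = map (row (mode_unfolding I n X)) js"
proof (rule nth_equalityI)
  fix s assume "s < length (rows (mode_unfolding (I[n := length js]) n (select_slices n js X)))"
  then have s: "s < length js" using n by simp
  show "rows (mode_unfolding (I[n := length js]) n (select_slices n js X)) ! s
    = map (row (mode_unfolding I n X)) js ! s"
  proof (rule eq_vecI)
    fix c assume "c < dim_vec (map (row (mode_unfolding I n X)) js ! s)"
    then have c: "c < dim_col (mode_unfolding I n X)" using s by simp
    then show "rows (mode_unfolding (I[n := length js]) n (select_slices n js X)) ! s $ c
      = map (row (mode_unfolding I n X)) js ! s $ c"
      using s n js by (simp add: select_slices_def)
  qed (use s n in simp)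
qed (use n in simp)

lemma mode_slices_expansion:
  assumes n: "n < length I" and i: "i \<in> tensor_indices I"
    and rows: "\<And>t c. t < I ! n \<Longrightarrow> c < dim_col (mode_unfolding I n X) \<Longrightarrow>
      mode_unfolding I n X $$ (t, c) = (\<Sum>s<length js. B t s * mode_unfolding I n X $$ (js ! s, c))"
    and js: "\<forall>s<length js. js ! s < I ! n"
  shows "X i = (\<Sum>s<length js. B (i ! n) s * X (i[n := js ! s]))"
proof -
  obtain c where c: "c < dim_col (mode_unfolding I n X)" and ci: "\<And>r. unfold_index I n r c = i[n := r]"
    using unfold_index_surj[OF n i] by blast
  have "i ! n < I ! n" using i n by (simp add: tensor_indices_def)
  have "X i = mode_unfolding I n X $$ (i ! n, c)" using \<open>i ! n < I ! n\<close> c ci by simp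
  also have "\<dots> = (\<Sum>s<length js. B (i ! n) s * mode_unfolding I n X $$ (js ! s, c))"
    using rows \<open>i ! n < I ! n\<close> c by blast
  also have "\<dots> = (\<Sum>s<length js. B (i ! n) s * X (i[n := js ! s]))"
    using js c ci by simp
  finally show ?thesis .
qed

lemma mode_fiber_select_slices:
  assumes "m \<noteq> n"
  shows "mode_fiber (I[n := length js]) m (select_slices n js X) j
    = mode_fiber I m X (j[n := js ! (j ! n)])"
  using assms by (simp add: mode_fiber_def select_slices_def list_update_swap)

lemma mode_fiber_expansion:
  fixes X :: "nat list \<Rightarrow> 'a :: comm_semiring_0"
  assumes n: "n < length I" and m: "m < length I" "m \<noteq> n" and i: "i \<in> tensor_indices I"
    and expansion: "\<forall>i\<in>tensor_indices I. X i = (\<Sum>s<length js. B (i ! n) s * X (i[n := js ! s]))"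
  shows "mode_fiber I m X i = mat_of_cols (I ! m)
      (map (\<lambda>s. mode_fiber (I[n := length js]) m (select_slices n js X) (i[n := s])) [0..<length js])
    *\<^sub>v vec (length js) (B (i ! n))"
    (is "_ = mat_of_cols _ ?ws *\<^sub>v _")
proof (rule eq_vecI)
  fix r assume "r < dim_vec (mat_of_cols (I ! m) ?ws *\<^sub>v vec (length js) (B (i ! n)))"
  then have r: "r < I ! m" by simp
  have "length i = length I" using i by (simp add: tensor_indices_def)
  then have fiber: "mode_fiber (I[n := length js]) m (select_slices n js X) (i[n := s]) $ r
      = X (i[n := js ! s, m := r])" for s
    using r m n by (simp add: mode_fiber_def select_slices_def list_update_swap[OF \<open>m \<noteq> n\<close>])
  have "i[m := r] \<in> tensor_indices I" using i r m by (auto simp: tensor_indices_def nth_list_update)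
  then have "mode_fiber I m X i $ r = (\<Sum>s<length js. B (i ! n) s * X (i[n := js ! s, m := r]))"
    using expansion r m by (simp add: mode_fiber_def list_update_swap[OF \<open>m \<noteq> n\<close>])
  also have "\<dots> = (\<Sum>s<length ?ws. vec (length js) (B (i ! n)) $ s * ?ws ! s $ r)"
    by (simp add: fiber)
  also have "\<dots> = (mat_of_cols (I ! m) ?ws *\<^sub>v vec (length js) (B (i ! n))) $ r"
    by (rule index_mat_of_cols_mult_vec[symmetric]) (use r in auto)
  finally show "mode_fiber I m X i $ r = (mat_of_cols (I ! m) ?ws *\<^sub>v vec (length js) (B (i ! n))) $ r" .
qed (simp add: mode_fiber_def)

lemma rank_mode_unfolding_select_slices_other_mode:
  assumes n: "n < length I" and m: "m < length I" "m \<noteq> n"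
    and pos: "\<forall>k<length I. 0 < I ! k" and js: "\<forall>s<length js. js ! s < I ! n"
    and expansion: "\<forall>i\<in>tensor_indices I. X i = (\<Sum>s<length js. B (i ! n) s * X (i[n := js ! s]))"
  shows "mat_rank (mode_unfolding (I[n := length js]) m (select_slices n js X))
    = mat_rank (mode_unfolding I m X)"
proof -
  interpret vec_space "TYPE(real)" "I ! m" .
  define I' where "I' = I[n := length js]"
  define Y where "Y = mode_unfolding I' m (select_slices n js X)"
  have I'm: "I' ! m = I ! m" using m by (simp add: I'_def)
  have Y: "Y \<in> carrier_mat (I ! m) (dim_col Y)"
    using mode_unfolding_carrier[of I' m] I'm by (simp add: Y_def)
  have cols_Y: "set (cols Y) = mode_fiber I' m (select_slices n js X) ` tensor_indices I'"
    using set_cols_mode_unfolding[of m I'] m pos I'm by (simp add: Y_def I'_def)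
  have cols_X: "set (cols (mode_unfolding I m X)) = mode_fiber I m X ` tensor_indices I"
    using set_cols_mode_unfolding[of m I] m pos by simp
  have "rank Y = rank (mode_unfolding I m X)"
  proof (rule rank_eq_of_cols_subset_span[OF Y mode_unfolding_carrier])
    have "j[n := js ! (j ! n)] \<in> tensor_indices I" if "j \<in> tensor_indices I'" for j
      using that n js by (auto simp: tensor_indices_def I'_def nth_list_update)
    then show "set (cols Y) \<subseteq> set (cols (mode_unfolding I m X))"
      using m(2) by (auto simp: cols_Y cols_X I'_def mode_fiber_select_slices)
  next
    show "set (cols (mode_unfolding I m X)) \<subseteq> span (set (cols Y))"
    proof
      fix v assume "v \<in> set (cols (mode_unfolding I m X))"
      then obtain i where i: "i \<in> tensor_indices I" and v: "v = mode_fiber I m X i"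
        using cols_X by blast
      define ws where "ws = map (\<lambda>s. mode_fiber I' m (select_slices n js X) (i[n := s])) [0..<length js]"
      have "i[n := s] \<in> tensor_indices I'" if "s < length js" for s
        using i n that by (auto simp: tensor_indices_def I'_def nth_list_update)
      then have ws: "set ws \<subseteq> set (cols Y)" unfolding ws_def cols_Y by auto
      then have "set ws \<subseteq> carrier_vec (I ! m)" using cols_dim[of Y] Y by auto
      then have W: "mat_of_cols (I ! m) ws \<in> carrier_mat (I ! m) (length ws)"
        and "cols (mat_of_cols (I ! m) ws) = ws" by auto
      have "v = mat_of_cols (I ! m) ws *\<^sub>v vec (length ws) (B (i ! n))"
        using mode_fiber_expansion[OF n m i expansion] by (simp add: v ws_def I'_def)
      then have "v \<in> span (set ws)"
        using span_cols_eq_image_mult_mat_vec[OF W] \<open>cols (mat_of_cols (I ! m) ws) = ws\<close> by auto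
      then show "v \<in> span (set (cols Y))" using span_is_monotone[OF ws] by blast
    qed
  qed
  then show ?thesis using I'm by (simp add: mat_rank_def Y_def I'_def)
qed

lemma rank_mode_unfolding_select_slices_same_mode:
  assumes n: "n < length I" and js: "\<forall>s<length js. js ! s < I ! n"
    and indpt: "distinct (map (row (mode_unfolding I n X)) js)"
      "module.lin_indpt class_ring (module_vec TYPE(real) (dim_col (mode_unfolding I n X)))
         (set (map (row (mode_unfolding I n X)) js))"
  shows "mat_rank (mode_unfolding (I[n := length js]) n (select_slices n js X)) = length js"
proof -
  let ?Y = "mode_unfolding (I[n := length js]) n (select_slices n js X)"
  have Y: "?Y \<in> carrier_mat (length js) (dim_col (mode_unfolding I n X))"
    using n by (simp add: carrier_matI)
  have "rows ?Y = map (row (mode_unfolding I n X)) js"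
    by (rule rows_mode_unfolding_select_slices[OF n js])
  then have "vec_space.rank (length js) ?Y = length js"
    using rank_eq_dim_row_of_indpt_rows[OF Y] indpt by simp
  then show ?thesis using n by (simp add: mat_rank_def)
qed

theorem lemma3p4:
  fixes I :: "nat list" and X :: "nat list \<Rightarrow> real" and n :: nat and js :: "nat list"
  assumes dims_pos: "\<forall>k<length I. 0 < I ! k"
    and nonzero: "\<exists>i\<in>tensor_indices I. X i \<noteq> 0"
    and n_le: "n < length I"
    and len_js: "length js = mat_rank (mode_unfolding I n X)"
    and js_sorted: "sorted_wrt (<) js"
    and js_bound: "\<forall>s<length js. js ! s < I ! n"
    and js_indep:
      "distinct (map (row (mode_unfolding I n X)) js) \<and>
       module.lin_indpt class_ring (module_vec TYPE(real) (dim_col (mode_unfolding I n X)))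
         (set (map (row (mode_unfolding I n X)) js))"
  shows "let R = mat_rank (mode_unfolding I n X);
             A = mat R (I ! n) (\<lambda>(s, t). if t = js ! s then 1 else 0);
             Y = mode_product I n X A
         in is_subtensor I X (I[n := R]) Y \<and>
            (\<forall>m<length I. mat_rank (mode_unfolding (I[n := R]) m Y) = mat_rank (mode_unfolding I m X))"
proof -
  define M where "M = mode_unfolding I n X"
  define Y where "Y = mode_product I n X (mat (length js) (I ! n) (\<lambda>(s, t). if t = js ! s then 1 else 0))"
  interpret vec_space "TYPE(real)" "dim_col M" .
  obtain B where B: "\<And>t c. t < I ! n \<Longrightarrow> c < dim_col M \<Longrightarrow>
      M $$ (t, c) = (\<Sum>s<length js. B t s * M $$ (js ! s, c))"
    using entries_lincomb_of_indpt_rows[of M "I ! n" js] mode_unfolding_carrier js_bound js_indep len_js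
    by (auto simp: M_def mat_rank_def)
  have expansion: "\<forall>i\<in>tensor_indices I. X i = (\<Sum>s<length js. B (i ! n) s * X (i[n := js ! s]))"
    using mode_slices_expansion[OF n_le _ B[unfolded M_def] js_bound] by blast
  then have "js \<noteq> []" using nonzero by auto
  have YZ: "\<forall>j\<in>tensor_indices (I[n := length js]). Y j = select_slices n js X j"
    using mode_product_selection_matrix js_bound n_le by (auto simp: Y_def tensor_indices_def)
  have "is_subtensor I X (I[n := length js]) Y"
    using is_subtensor_select_slices[OF n_le dims_pos \<open>js \<noteq> []\<close> js_sorted js_bound] YZ
    by (rule is_subtensor_cong)
  moreover have "mat_rank (mode_unfolding (I[n := length js]) m Y) = mat_rank (mode_unfolding I m X)"
    if m: "m < length I" for m
  proof (cases "m = n")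
    case True
    then show ?thesis
      using mode_unfolding_cong[OF YZ] rank_mode_unfolding_select_slices_same_mode[OF n_le js_bound]
        js_indep len_js
      by simp
  next
    case False
    then show ?thesis
      using mode_unfolding_cong[OF YZ]
        rank_mode_unfolding_select_slices_other_mode[OF n_le m False dims_pos js_bound expansion]
      by simp
  qed
  ultimately show ?thesis using len_js by (simp add: Y_def)
qed

end
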